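(* Let $m,k$ be positive integers. Define on $\mathbb{F}_{2^m}\times\mathbb{F}_{2^m}$ \[f_1(x,y)=(x^{2^k+1}+xy^{2^k}+y^{2^k+1},\;x^{2^{2k}+1}+x^{2^{2k}}y+y^{2^{2k}+1}),\] \[f_2(x,y)=(x^{2^k+1}+xy^{2^k}+y^{2^k+1},\;x^{2^{3k}}y+xy^{2^{3k}}).\] If $\gcd(3k,m)=1$, then $f_1$ is an almost-3-to-1 APN map. If $\gcd(3k,m)=1$ and $m$ is odd, then $f_2$ is an almost-3-to-1 APN map.
   Context: A map $F$ on $\mathbb{F}_{2^m}\times\mathbb{F}_{2^m}$ (an $\mathbb{F}_2$-vector space) is APN if for every nonzero $a$ and every $b$ the equation $F(z+a)+F(z)=b$ has at most 2 solutions. $F$ is almost-3-to-1 if there is a unique element of its image with exactly one preimage and every other element of the image has exactly 3 preimages. *)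

theory Defs
  imports Main "HOL-Library.Product_Plus"
begin

definition APN :: "('v::{ab_group_add,finite} \<Rightarrow> 'w::ab_group_add) \<Rightarrow> bool" where
  "APN F \<longleftrightarrow> (\<forall>a b. a \<noteq> 0 \<longrightarrow> card {z. F (z + a) + F z = b} \<le> 2)"

definition almost_3_to_1 :: "('v::finite \<Rightarrow> 'w) \<Rightarrow> bool" where
  "almost_3_to_1 F \<longleftrightarrow>
     (\<exists>!y. y \<in> range F \<and> card (F -` {y}) = 1) \<and>
     (\<forall>y \<in> range F. card (F -` {y}) \<noteq> 1 \<longrightarrow> card (F -` {y}) = 3)"

definition f1 :: "nat \<Rightarrow> ('a::field \<times> 'a) \<Rightarrow> 'a \<times> 'a" where
  "f1 k = (\<lambda>(x, y).
     (x ^ (2^k + 1) + x * y ^ (2^k) + y ^ (2^k + 1),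
      x ^ (2^(2*k) + 1) + x ^ (2^(2*k)) * y + y ^ (2^(2*k) + 1)))"

definition f2 :: "nat \<Rightarrow> ('a::field \<times> 'a) \<Rightarrow> 'a \<times> 'a" where
  "f2 k = (\<lambda>(x, y).
     (x ^ (2^k + 1) + x * y ^ (2^k) + y ^ (2^k + 1),
      x ^ (2^(3*k)) * y + x * y ^ (2^(3*k))))"

end

theory Submission
  imports Defs "HOL-Number_Theory.Residues"
begin

text \<open>
  Write \<open>\<sigma> x = x ^ 2 ^ k\<close>. Both maps are quadratic: for fixed \<open>a\<close> the polar map
  \<open>u \<mapsto> F (u + a) - F u - F a\<close> is additive, so \<open>F\<close> is APN as soon as, for \<open>a \<noteq> 0\<close>, this map
  vanishes only at \<open>u = 0\<close> and \<open>u = a\<close>. Both maps are also invariant under the additive map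
  \<open>\<rho> (x, y) = (y, x + y)\<close>, which has order 3 and no nonzero fixed points; together with the kernel
  property this makes every nonzero fibre a \<open>\<rho>\<close>-orbit with three elements.

  For the kernel one may assume (after applying \<open>\<rho>\<close>) \<open>a = s (1, c)\<close> and write
  \<open>u = s (l, l c + w)\<close>; the two coordinates of the polar map become \<open>\<sigma>\<close>-semilinear equations in
  \<open>c\<close>, \<open>l\<close>, \<open>w\<close>. Eliminating \<open>l\<close> between them and their \<open>\<sigma>\<close>-conjugates yields \<open>X\<close>, \<open>Y\<close> with
  \<open>(\<sigma> X, \<sigma> Y) = (Y, X + Y)\<close> up to a common nonzero factor, so \<open>\<sigma>\<^sup>3\<close> fixes them after scaling.
  The fixed field of \<open>\<sigma>\<^sup>3\<close> (of \<open>\<sigma>\<^sup>6\<close> for the second map) is \<open>\<bbbF>\<^sub>2\<close> -- this is where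
  \<open>gcd (3 k) m = 1\<close> and the parity of \<open>m\<close> enter -- which forces \<open>X = Y = 0\<close>, then \<open>w = 0\<close> and
  \<open>\<sigma> l = l\<close>. For the second map this is done twice: first to show
  \<open>R = (l + \<sigma> l) (c + \<sigma> c) + w + \<sigma> w = 0\<close>, after which \<open>w / (1 + c + c\<^sup>2)\<close> and
  \<open>l + c w / (1 + c + c\<^sup>2)\<close> are fixed by \<open>\<sigma>\<^sup>2\<close>.
\<close>

section \<open>Characteristic 2 and finite fields\<close>

lemma CHAR_eq_2_if_card_power_2:
  assumes "card (UNIV :: 'a::{field,finite} set) = 2 ^ m"
  shows "CHAR('a) = 2"
proof -
  have "prime CHAR('a)"
    by (rule prime_CHAR_semidom) (simp add: finite_imp_CHAR_pos)
  moreover have "CHAR('a) dvd 2 ^ m"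
    using CHAR_dvd_CARD[where 'a = 'a] assms by simp
  ultimately have "CHAR('a) dvd 2"
    using prime_dvd_power by blast
  then show ?thesis
    using \<open>prime CHAR('a)\<close> by (simp add: primes_dvd_imp_eq)
qed

lemma power_card_eq_self:
  fixes x :: "'a::{field,finite}"
  shows "x ^ card (UNIV :: 'a set) = x"
proof (cases "x = 0")
  case True
  then show ?thesis by (simp add: finite_UNIV_card_ge_0)
next
  case False
  let ?U = "UNIV - {0::'a}"
  have "bij_betw ((*) x) ?U ?U"
    using False by (intro bij_betwI[where g = "\<lambda>y. y / x"]) auto
  then have "(\<Prod>y\<in>?U. x * y) = \<Prod>?U"
    by (rule prod.reindex_bij_betw)
  moreover have "(\<Prod>y\<in>?U. x * y) = x ^ card ?U * \<Prod>?U"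
    by (simp add: prod.distrib)
  moreover have "\<Prod>?U \<noteq> 0"
    by (simp add: prod_zero_iff)
  ultimately have "x ^ card ?U = 1"
    by simp
  moreover have "card (UNIV :: 'a set) = Suc (card ?U)"
    by (simp add: card_Diff_singleton finite_UNIV_card_ge_0)
  ultimately show ?thesis
    by (metis power_Suc mult.right_neutral)
qed

lemma fixed_by_coprime_two_powers:
  fixes x :: "'a::idom"
  assumes "x ^ 2 ^ e = x" and "x ^ 2 ^ m = x" and "coprime e m"
  shows "x = 0 \<or> x = 1"
proof -
  have iterate: "x ^ 2 ^ (d * n) = x" if "x ^ 2 ^ d = x" for d n
  proof (induction n)
    case (Suc n)
    have "x ^ 2 ^ (d * Suc n) = (x ^ 2 ^ d) ^ 2 ^ (d * n)"
      by (simp add: power_add power_mult)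
    then show ?case
      using Suc that by simp
  qed simp
  have "x ^ 2 = x"
  proof (cases "e = 0")
    case True
    then show ?thesis
      using assms by simp
  next
    case False
    then obtain a b where "e * a = m * b + 1"
      using bezout_nat[OF False, of m] assms(3) by (auto simp: coprime_iff_gcd_eq_1)
    then have "x = (x ^ 2 ^ (m * b)) ^ 2"
      using iterate[OF assms(1), of a] by (simp add: power_mult[symmetric] mult.commute)
    then show ?thesis
      using iterate[OF assms(2)] by simp
  qed
  then have "x * (x - 1) = 0"
    by (simp add: algebra_simps power2_eq_square)
  then show ?thesis
    by simp
qed

lemma char2_two_eq_0:
  assumes "CHAR('a::comm_ring_1) = 2"
  shows "(2::'a) = 0"
  using of_nat_CHAR[where 'a = 'a] assms by simp

lemma char2_add_self:
  assumes "CHAR('a::comm_ring_1) = 2"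
  shows "x + x = (0::'a)"
  using char2_two_eq_0[OF assms] by (metis mult_2 mult_zero_left)

lemma char2_numeral:
  assumes "CHAR('a::comm_ring_1) = 2"
  shows "numeral (Num.Bit0 n) = (0::'a)" and "numeral (Num.Bit1 n) = (1::'a)"
  by (simp_all only: numeral_Bit0 numeral_Bit1 char2_add_self[OF assms] add_0)

lemma char2_power_two_power_add:
  assumes "CHAR('a::comm_ring_1) = 2"
  shows "(x + y) ^ 2 ^ j = x ^ 2 ^ j + (y::'a) ^ 2 ^ j"
proof (induction j)
  case (Suc j)
  have square: "z ^ 2 ^ Suc j = (z ^ 2 ^ j) ^ 2" for z :: 'a
    by (simp add: power_mult[symmetric] mult.commute)
  have "(x + y) ^ 2 ^ Suc j = (x ^ 2 ^ j + y ^ 2 ^ j) ^ 2"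
    by (simp only: square Suc)
  also have "\<dots> = (x ^ 2 ^ j) ^ 2 + (y ^ 2 ^ j) ^ 2 + 2 * (x ^ 2 ^ j * y ^ 2 ^ j)"
    by (simp add: power2_eq_square algebra_simps)
  finally show ?case
    by (simp only: square[of x] square[of y]) (simp add: char2_two_eq_0[OF assms])
qed simp

section \<open>Quadratic maps\<close>

definition polar :: "('v::ab_group_add \<Rightarrow> 'w::ab_group_add) \<Rightarrow> 'v \<Rightarrow> 'v \<Rightarrow> 'w" where
  "polar F a u = F (u + a) - F u - F a"

lemma polar_Pair:
  "polar (\<lambda>z. (A z, B z)) a u = (polar A a u, polar B a u)"
  by (simp add: polar_def)

lemma APN_if_polar_kernel:
  fixes F :: "'v::{ab_group_add,finite} \<Rightarrow> 'w::ab_group_add"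
  assumes char2: "\<And>w::'w. w + w = 0"
    and additive: "\<And>a u v. polar F a (u + v) = polar F a u + polar F a v"
    and kernel: "\<And>a u. a \<noteq> 0 \<Longrightarrow> polar F a u = 0 \<Longrightarrow> u = 0 \<or> u = a"
  shows "APN F"
  unfolding APN_def
proof (intro allI impI)
  fix a :: 'v and b :: 'w
  assume "a \<noteq> 0"
  let ?S = "{z. F (z + a) + F z = b}"
  have minus_eq_plus: "x - y = x + y" for x y :: 'w
    using minus_unique[OF char2[of y]] by simp
  have solutions: "?S \<subseteq> {z0, z0 + a}" if "z0 \<in> ?S" for z0
  proof
    fix z assume "z \<in> ?S"
    have "polar F a z = polar F a (z - z0) + polar F a z0"
      using additive[of a "z - z0" z0] by simp
    moreover have "polar F a z = polar F a z0"
      using \<open>z \<in> ?S\<close> \<open>z0 \<in> ?S\<close> by (simp add: polar_def minus_eq_plus)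
    ultimately have "polar F a (z - z0) = 0"
      by simp
    then have "z - z0 = 0 \<or> z - z0 = a"
      using kernel \<open>a \<noteq> 0\<close> by blast
    then show "z \<in> {z0, z0 + a}"
      by (auto simp: algebra_simps)
  qed
  show "card ?S \<le> 2"
  proof (cases "?S = {}")
    case False
    then obtain z0 where "z0 \<in> ?S"
      by blast
    then have "card ?S \<le> card {z0, z0 + a}"
      using solutions by (intro card_mono) auto
    also have "\<dots> \<le> 2"
      by (simp add: card_insert_if)
    finally show ?thesis .
  qed simp
qed

lemma order3_map_cube:
  fixes \<rho> :: "'v::ab_group_add \<Rightarrow> 'v"
  assumes char2: "\<And>v::'v. v + v = 0" and order3: "\<And>z. \<rho> (\<rho> z) = \<rho> z + z"
  shows "\<rho> (\<rho> (\<rho> z)) = z"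
  using order3[of "\<rho> z"] order3[of z] char2[of "\<rho> z"] by (simp add: algebra_simps)

lemma order3_map_orbit_card:
  fixes \<rho> :: "'v::ab_group_add \<Rightarrow> 'v"
  assumes char2: "\<And>v::'v. v + v = 0" and order3: "\<And>z. \<rho> (\<rho> z) = \<rho> z + z"
  shows "card {u, \<rho> u, \<rho> (\<rho> u)} = (if u = 0 then 1 else 3)"
proof -
  have fixed_0: "z = 0" if "\<rho> z = z" for z
    using order3[of z] char2[of z] that by simp
  then have "\<rho> 0 = 0"
    using order3[of 0] by simp
  show ?thesis
  proof (cases "u = 0")
    case False
    have "\<rho> u \<noteq> 0"
      using False \<open>\<rho> 0 = 0\<close> order3_map_cube[OF char2 order3, of u] by force
    then have "\<rho> u \<noteq> u" "\<rho> (\<rho> u) \<noteq> \<rho> u" "\<rho> (\<rho> u) \<noteq> u"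
      using False fixed_0 order3[of u] by (auto simp: add.commute)
    with False show ?thesis
      by simp
  qed (simp add: \<open>\<rho> 0 = 0\<close>)
qed

lemma polar_kernel_fibre:
  fixes F :: "'v::ab_group_add \<Rightarrow> 'w::ab_group_add" and \<rho> :: "'v \<Rightarrow> 'v"
  assumes char2: "\<And>v::'v. v + v = 0"
    and additive: "\<And>a u v. polar F a (u + v) = polar F a u + polar F a v"
    and kernel: "\<And>a u. a \<noteq> 0 \<Longrightarrow> polar F a u = 0 \<Longrightarrow> u = 0 \<or> u = a"
    and invariant: "\<And>z. F (\<rho> z) = F z"
    and order3: "\<And>z. \<rho> (\<rho> z) = \<rho> z + z"
  shows "F -` {F u} = {u, \<rho> u, \<rho> (\<rho> u)}"
proof (intro equalityI subsetI)
  fix v assume "v \<in> F -` {F u}"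
  show "v \<in> {u, \<rho> u, \<rho> (\<rho> u)}"
  proof (cases "v = u")
    case False
    define a where "a = v - u"
    have "a \<noteq> 0" and v: "v = u + a"
      using False by (simp_all add: a_def)
    have "polar F a u = polar F a (\<rho> a)"
      using \<open>v \<in> F -` {F u}\<close> invariant[of a] invariant[of "\<rho> a"]
      by (simp add: polar_def v order3[symmetric])
    moreover have "polar F a u = polar F a (u - \<rho> a) + polar F a (\<rho> a)"
      using additive[of a "u - \<rho> a" "\<rho> a"] by simp
    ultimately have "polar F a (u - \<rho> a) = 0"
      by simp
    then have "u - \<rho> a = 0 \<or> u - \<rho> a = a"
      using kernel \<open>a \<noteq> 0\<close> by blast
    then have "u = \<rho> a \<or> u = \<rho> a + a"
      by (auto simp: diff_eq_eq add.commute)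
    moreover have "\<rho> a + a + a = \<rho> a"
      using char2[of a] by (simp add: add.assoc)
    ultimately show ?thesis
      using v order3[of a] order3_map_cube[OF char2 order3, of "\<rho> a"] by auto
  qed simp
qed (use invariant in auto)

lemma almost_3_to_1_if_fibre_card:
  fixes F :: "'v::{zero,finite} \<Rightarrow> 'w"
  assumes "\<And>u. card (F -` {F u}) = (if u = 0 then 1 else 3)"
  shows "almost_3_to_1 F"
  unfolding almost_3_to_1_def
proof (intro conjI ballI impI)
  show "\<exists>!y. y \<in> range F \<and> card (F -` {y}) = 1"
    by (rule ex1I[of _ "F 0"]) (auto simp: assms split: if_splits)
next
  fix y assume "y \<in> range F" and "card (F -` {y}) \<noteq> 1"
  then show "card (F -` {y}) = 3"
    by (auto simp: assms split: if_splits)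
qed

lemma almost_3_to_1_if_polar_kernel:
  fixes F :: "'v::{ab_group_add,finite} \<Rightarrow> 'w::ab_group_add" and \<rho> :: "'v \<Rightarrow> 'v"
  assumes char2: "\<And>v::'v. v + v = 0"
    and additive: "\<And>a u v. polar F a (u + v) = polar F a u + polar F a v"
    and kernel: "\<And>a u. a \<noteq> 0 \<Longrightarrow> polar F a u = 0 \<Longrightarrow> u = 0 \<or> u = a"
    and invariant: "\<And>z. F (\<rho> z) = F z"
    and order3: "\<And>z. \<rho> (\<rho> z) = \<rho> z + z"
  shows "almost_3_to_1 F"
  using polar_kernel_fibre[OF assms] order3_map_orbit_card[OF char2 order3]
  by (intro almost_3_to_1_if_fibre_card) simp

section \<open>The rotation \<open>(x, y) \<mapsto> (y, x + y)\<close>\<close>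

definition rot :: "'a::ab_group_add \<times> 'a \<Rightarrow> 'a \<times> 'a" where
  "rot = (\<lambda>(x, y). (y, x + y))"

lemma rot_add: "rot (u + v) = rot u + rot v"
  by (cases u, cases v) (simp add: rot_def)

lemma rot_eq_0_iff [simp]: "rot z = 0 \<longleftrightarrow> z = 0"
  by (cases z) (auto simp: rot_def zero_prod_def)

lemma fst_rot [simp]: "fst (rot z) = snd z"
  by (cases z) (simp add: rot_def)

lemma rot_inj: "rot u = rot v \<Longrightarrow> u = v"
  by (cases u, cases v) (simp add: rot_def)

lemma rot_rot:
  assumes "CHAR('a::comm_ring_1) = 2"
  shows "rot (rot z) = rot z + (z :: 'a \<times> 'a)"
  by (cases z) (simp add: rot_def add.assoc char2_two_eq_0[OF assms])

lemma polar_rot: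
  assumes "\<And>z. F (rot z) = F z"
  shows "polar F (rot a) (rot u) = polar F a u"
  by (simp add: polar_def rot_add[symmetric] assms)

lemma polar_kernel_if_rot_invariant:
  fixes F :: "'a::ab_group_add \<times> 'a \<Rightarrow> 'w::ab_group_add"
  assumes invariant: "\<And>z. F (rot z) = F z"
    and kernel: "\<And>a u. fst a \<noteq> 0 \<Longrightarrow> polar F a u = 0 \<Longrightarrow> u = 0 \<or> u = a"
    and "a \<noteq> 0" and "polar F a u = 0"
  shows "u = 0 \<or> u = a"
proof (cases "fst a = 0")
  case True
  with \<open>a \<noteq> 0\<close> have "fst (rot a) \<noteq> 0"
    by (cases a) (auto simp: zero_prod_def)
  moreover have "polar F (rot a) (rot u) = 0"
    using \<open>polar F a u = 0\<close> by (simp add: polar_rot invariant)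
  ultimately have "rot u = 0 \<or> rot u = rot a"
    using kernel by blast
  then show ?thesis
    by (auto dest: rot_inj)
qed (use assms in blast)

lemma normal_coordinates:
  fixes a u :: "'a::field \<times> 'a"
  assumes "fst a \<noteq> 0"
  obtains s c l w where "s \<noteq> 0" and "a = (s, c * s)" and "u = (l * s, (w + l * c) * s)"
proof (cases a, cases u)
  fix s t x y
  assume "a = (s, t)" and "u = (x, y)"
  with assms have "s \<noteq> 0" and "a = (s, (t / s) * s)"
    and "u = ((x / s) * s, ((y / s - x / s * (t / s)) + x / s * (t / s)) * s)"
    by simp_all
  then show thesis
    by (rule that)
qed

section \<open>Maps defined by a field endomorphism of characteristic 2\<close>

text \<open>\<open>\<sigma>\<close> abstracts the Frobenius power \<open>x \<mapsto> x ^ 2 ^ k\<close>; \<open>F1\<close> and \<open>F2\<close> are \<open>f1\<close> and \<open>f2\<close>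
  written in terms of \<open>\<sigma>\<close>.\<close>

locale char2_field_endo =
  fixes \<sigma> :: "'a::field \<Rightarrow> 'a"
  assumes char2: "CHAR('a) = 2"
    and endo_add [simp]: "\<sigma> (x + y) = \<sigma> x + \<sigma> y"
    and endo_mult [simp]: "\<sigma> (x * y) = \<sigma> x * \<sigma> y"
    and endo_one [simp]: "\<sigma> 1 = 1"
begin

lemma endo_zero [simp]: "\<sigma> 0 = 0"
  by (metis add_0 add_cancel_right_right endo_add)

lemma endo_power [simp]: "\<sigma> (x ^ n) = \<sigma> x ^ n"
  by (induction n) simp_all

lemma endo_eq_0_iff [simp]: "\<sigma> x = 0 \<longleftrightarrow> x = 0"
proof
  assume "\<sigma> x = 0"
  show "x = 0"
  proof (rule ccontr)
    assume "x \<noteq> 0"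
    then have "\<sigma> x * \<sigma> (inverse x) = 1"
      by (simp flip: endo_mult)
    with \<open>\<sigma> x = 0\<close> show False
      by simp
  qed
qed simp

lemma endo_inverse [simp]: "\<sigma> (inverse x) = inverse (\<sigma> x)"
proof (cases "x = 0")
  case False
  then have "\<sigma> x * \<sigma> (inverse x) = 1"
    by (simp flip: endo_mult)
  then show ?thesis
    by (simp add: inverse_unique)
qed simp

lemma endo_divide [simp]: "\<sigma> (x / y) = \<sigma> x / \<sigma> y"
  by (simp add: divide_inverse)

lemma char2_add_eq_0_iff: "x + y = 0 \<longleftrightarrow> x = (y::'a)"
  by (metis add_diff_cancel_right' char2 char2_add_self diff_0 minus_CHAR_2)

lemma char2_prod_add_self: "z + z = (0 :: 'a \<times> 'a)"
  by (cases z) (simp add: char2_add_self[OF char2] zero_prod_def)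

lemmas char2_ring = algebra_simps power2_eq_square char2_numeral[OF char2] minus_CHAR_2[OF char2]

definition Q :: "'a \<times> 'a \<Rightarrow> 'a" where
  "Q = (\<lambda>(x, y). x * \<sigma> x + x * \<sigma> y + y * \<sigma> y)"

definition G1 :: "'a \<times> 'a \<Rightarrow> 'a" where
  "G1 = (\<lambda>(x, y). x * \<sigma> (\<sigma> x) + \<sigma> (\<sigma> x) * y + y * \<sigma> (\<sigma> y))"

definition G2 :: "'a \<times> 'a \<Rightarrow> 'a" where
  "G2 = (\<lambda>(x, y). \<sigma> (\<sigma> (\<sigma> x)) * y + x * \<sigma> (\<sigma> (\<sigma> y)))"

definition F1 :: "'a \<times> 'a \<Rightarrow> 'a \<times> 'a" where
  "F1 = (\<lambda>z. (Q z, G1 z))"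

definition F2 :: "'a \<times> 'a \<Rightarrow> 'a \<times> 'a" where
  "F2 = (\<lambda>z. (Q z, G2 z))"

lemma Q_rot: "Q (rot z) = Q z"
  by (cases z) (simp add: Q_def rot_def char2_ring)

lemma G1_rot: "G1 (rot z) = G1 z"
  by (cases z) (simp add: G1_def rot_def char2_ring)

lemma G2_rot: "G2 (rot z) = G2 z"
  by (cases z) (simp add: G2_def rot_def char2_ring)

lemma F1_rot: "F1 (rot z) = F1 z"
  by (simp add: F1_def Q_rot G1_rot)

lemma F2_rot: "F2 (rot z) = F2 z"
  by (simp add: F2_def Q_rot G2_rot)

lemma polar_Q_add: "polar Q a (u + v) = polar Q a u + polar Q a v"
  by (cases a, cases u, cases v) (simp add: polar_def Q_def char2_ring)

lemma polar_G1_add: "polar G1 a (u + v) = polar G1 a u + polar G1 a v"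
  by (cases a, cases u, cases v) (simp add: polar_def G1_def char2_ring)

lemma polar_G2_add: "polar G2 a (u + v) = polar G2 a u + polar G2 a v"
  by (cases a, cases u, cases v) (simp add: polar_def G2_def char2_ring)

lemma polar_F1_add: "polar F1 a (u + v) = polar F1 a u + polar F1 a v"
  by (simp add: F1_def polar_Pair polar_Q_add polar_G1_add)

lemma polar_F2_add: "polar F2 a (u + v) = polar F2 a u + polar F2 a v"
  by (simp add: F2_def polar_Pair polar_Q_add polar_G2_add)

lemma polar_Q_normal:
  "polar Q (s, c * s) (l * s, (w + l * c) * s) =
     s * \<sigma> s * ((l + \<sigma> l) * (1 + \<sigma> c + c * \<sigma> c) + (1 + c) * \<sigma> w + w * \<sigma> c)"
  by (simp add: polar_def Q_def char2_ring)

lemma polar_G1_normal: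
  "polar G1 (s, c * s) (l * s, (w + l * c) * s) =
     s * \<sigma> (\<sigma> s) * ((l + \<sigma> (\<sigma> l)) * (1 + c + c * \<sigma> (\<sigma> c)) + w * (1 + \<sigma> (\<sigma> c)) + c * \<sigma> (\<sigma> w))"
  by (simp add: polar_def G1_def char2_ring)

lemma polar_G2_normal:
  "polar G2 (s, c * s) (l * s, (w + l * c) * s) =
     s * \<sigma> (\<sigma> (\<sigma> s)) * ((l + \<sigma> (\<sigma> (\<sigma> l))) * (c + \<sigma> (\<sigma> (\<sigma> c))) + w + \<sigma> (\<sigma> (\<sigma> w)))"
  by (simp add: polar_def G2_def char2_ring)

text \<open>The hypothesis says \<open>\<sigma> x = 1 + 1 / x\<close>, and \<open>x \<mapsto> 1 + 1 / x\<close> has order 3.\<close>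

lemma endo_cube_fixed_if_mobius:
  assumes "1 + x + x * \<sigma> x = 0"
  shows "\<sigma> (\<sigma> (\<sigma> x)) = x"
proof -
  define x' x'' x''' where "x' = \<sigma> x" and "x'' = \<sigma> x'" and "x''' = \<sigma> x''"
  note primes = x'_def[symmetric] x''_def[symmetric] x'''_def[symmetric]
  have h0: "1 + x + x * x' = 0"
    using assms by (simp add: primes)
  have h1: "1 + x' + x' * x'' = 0"
    using arg_cong[where f = \<sigma>, OF h0] by (simp add: primes)
  have h2: "1 + x'' + x'' * x''' = 0"
    using arg_cong[where f = \<sigma>, OF h1] by (simp add: primes)
  have "x''' + x = (1 + x) * (1 + x'' + x'' * x''') +
      (1 + x''') * (x * (1 + x' + x' * x'') + x'' * (1 + x + x * x') + (1 + x + x * x'))"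
    by (simp add: char2_ring)
  then have "x''' + x = 0"
    using h0 h1 h2 by simp
  then show ?thesis
    by (simp add: char2_add_eq_0_iff x'_def x''_def x'''_def)
qed

lemma F1_kernel_eliminate_l:
  assumes "(l + \<sigma> l) * (1 + \<sigma> c + c * \<sigma> c) + (1 + c) * \<sigma> w + w * \<sigma> c = 0"
    and "(l + \<sigma> (\<sigma> l)) * (1 + c + c * \<sigma> (\<sigma> c)) + w * (1 + \<sigma> (\<sigma> c)) + c * \<sigma> (\<sigma> w) = 0"
  shows "(1 + \<sigma> (\<sigma> c) + \<sigma> c * \<sigma> (\<sigma> c))\<^sup>2 * w + (1 + c + c * \<sigma> (\<sigma> c))\<^sup>2 * \<sigma> w
    + (1 + \<sigma> c + c * \<sigma> c)\<^sup>2 * \<sigma> (\<sigma> w) = 0"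
proof -
  define c' c'' l' l'' w' w'' where "c' = \<sigma> c" and "c'' = \<sigma> c'" and "l' = \<sigma> l"
    and "l'' = \<sigma> l'" and "w' = \<sigma> w" and "w'' = \<sigma> w'"
  note primes = c'_def[symmetric] c''_def[symmetric] l'_def[symmetric] l''_def[symmetric]
    w'_def[symmetric] w''_def[symmetric]
  have e1: "(l + l') * (1 + c' + c * c') + (1 + c) * w' + w * c' = 0"
    using assms(1) by (simp add: primes)
  have e1': "(l' + l'') * (1 + c'' + c' * c'') + (1 + c') * w'' + w' * c'' = 0"
    using arg_cong[where f = \<sigma>, OF e1] by (simp add: primes)
  have e2: "(l + l'') * (1 + c + c * c'') + w * (1 + c'') + c * w'' = 0"
    using assms(2) by (simp add: primes)
  have "(1 + c'' + c' * c'')\<^sup>2 * w + (1 + c + c * c'')\<^sup>2 * w' + (1 + c' + c * c')\<^sup>2 * w'' =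
      (1 + c'' + c' * c'') * (1 + c' + c * c') * ((l + l'') * (1 + c + c * c'') + w * (1 + c'') + c * w'') +
      (1 + c + c * c'') * (1 + c'' + c' * c'') * ((l + l') * (1 + c' + c * c') + (1 + c) * w' + w * c') +
      (1 + c + c * c'') * (1 + c' + c * c') * ((l' + l'') * (1 + c'' + c' * c'') + (1 + c') * w'' + w' * c'')"
    by (simp add: char2_ring)
  with e1 e1' e2 show ?thesis
    by (simp add: primes)
qed

end

section \<open>The kernel of the first map\<close>

locale char2_field_endo_fix3 = char2_field_endo +
  assumes fixed3: "\<sigma> (\<sigma> (\<sigma> x)) = x \<Longrightarrow> x = 0 \<or> x = 1"
begin

lemma fixed1: "\<sigma> x = x \<Longrightarrow> x = 0 \<or> x = 1"
  by (simp add: fixed3)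

lemma rot_twisted_fixed_point:
  assumes "\<sigma> t0 = t1" and "\<sigma> t1 = t0 + t1"
  shows "t0 = 0 \<and> t1 = 0"
proof -
  have "\<sigma> (\<sigma> (\<sigma> t0)) = t0"
    using assms by (simp add: char2_ring char2_add_self[OF char2])
  then have "t0 = 0 \<or> t0 = 1"
    by (rule fixed3)
  then have "\<sigma> t0 = t0"
    by auto
  then have "t0 + t1 = t1" and "t1 = t0"
    using assms by simp_all
  then show ?thesis
    by (metis add_cancel_left_left)
qed

lemma rot_twisted_fixed_point_scaled:
  assumes "D \<noteq> 0" and "D * \<sigma> X = \<sigma> D * Y" and "D * \<sigma> Y = \<sigma> D * (X + Y)"
  shows "X = 0 \<and> Y = 0"
proof -
  have "\<sigma> (X / D) = Y / D" and "\<sigma> (Y / D) = X / D + Y / D"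
    using assms by (simp_all add: frac_eq_eq add_divide_distrib[symmetric] mult.commute)
  then have "X / D = 0 \<and> Y / D = 0"
    by (rule rot_twisted_fixed_point)
  with \<open>D \<noteq> 0\<close> show ?thesis
    by simp
qed

lemma Q_one_nonzero: "Q (1, c) \<noteq> 0"
proof
  assume "Q (1, c) = 0"
  then have "1 + \<sigma> c + c * \<sigma> c = 0"
    by (simp add: Q_def)
  then have "1 + (1 + c) + (1 + c) * \<sigma> (1 + c) = 0"
    by (simp add: char2_ring)
  then have "\<sigma> (\<sigma> (\<sigma> (1 + c))) = 1 + c"
    by (rule endo_cube_fixed_if_mobius)
  then have "c = 0 \<or> c = 1"
    by (intro fixed3) simp
  with \<open>1 + \<sigma> c + c * \<sigma> c = 0\<close> show False
    by (auto simp: char2_ring)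
qed

lemma F1_kernel_normal:
  assumes E1: "(l + \<sigma> l) * (1 + \<sigma> c + c * \<sigma> c) + (1 + c) * \<sigma> w + w * \<sigma> c = 0"
    and E2: "(l + \<sigma> (\<sigma> l)) * (1 + c + c * \<sigma> (\<sigma> c)) + w * (1 + \<sigma> (\<sigma> c)) + c * \<sigma> (\<sigma> w) = 0"
  shows "w = 0 \<and> (l = 0 \<or> l = 1)"
proof -
  define c' c'' w' w'' where "c' = \<sigma> c" and "c'' = \<sigma> c'" and "w' = \<sigma> w" and "w'' = \<sigma> w'"
  note primes = c'_def[symmetric] c''_def[symmetric] w'_def[symmetric] w''_def[symmetric]
  define N N' M where "N = 1 + c' + c * c'" and "N' = 1 + c'' + c' * c''" and "M = 1 + c + c * c''"
  have elim: "N'\<^sup>2 * w + M\<^sup>2 * w' + N\<^sup>2 * w'' = 0"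
    using F1_kernel_eliminate_l[OF E1 E2] by (simp add: primes N_def N'_def M_def)
  have "N \<noteq> 0"
    using Q_one_nonzero[of c] by (simp add: Q_def primes N_def)
  define X Y where "X = w' + c\<^sup>2 * w' + w" and "Y = c\<^sup>2 * w' + c'\<^sup>2 * w + w"
  have "\<sigma> X = w'' + c'\<^sup>2 * w'' + w'" and "\<sigma> Y = c'\<^sup>2 * w'' + c''\<^sup>2 * w' + w'"
    and "\<sigma> (N\<^sup>2) = N'\<^sup>2"
    by (simp_all add: X_def Y_def N_def N'_def primes)
  moreover have "N\<^sup>2 * (w'' + c'\<^sup>2 * w'' + w') = N'\<^sup>2 * Y + (1 + c'\<^sup>2) * (N'\<^sup>2 * w + M\<^sup>2 * w' + N\<^sup>2 * w'')"
    and "N\<^sup>2 * (c'\<^sup>2 * w'' + c''\<^sup>2 * w' + w') =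
      N'\<^sup>2 * (X + Y) + c'\<^sup>2 * (N'\<^sup>2 * w + M\<^sup>2 * w' + N\<^sup>2 * w'')"
    by (simp_all add: X_def Y_def N_def N'_def M_def char2_ring)
  ultimately have "X = 0 \<and> Y = 0"
    using elim \<open>N \<noteq> 0\<close> by (intro rot_twisted_fixed_point_scaled[of "N\<^sup>2"]) simp_all
  moreover have "w' * N\<^sup>2 = Y + (1 + c'\<^sup>2) * X"
    by (simp add: X_def Y_def N_def char2_ring)
  ultimately have "w = 0"
    using \<open>N \<noteq> 0\<close> by (simp add: w'_def)
  with E1 have "(l + \<sigma> l) * (1 + \<sigma> c + c * \<sigma> c) = 0"
    by simp
  then have "\<sigma> l = l"
    using Q_one_nonzero[of c] by (simp add: Q_def char2_add_eq_0_iff)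
  with \<open>w = 0\<close> show ?thesis
    using fixed1 by blast
qed

lemma polar_F1_kernel:
  assumes "a \<noteq> 0" and "polar F1 a u = 0"
  shows "u = 0 \<or> u = a"
  using F1_rot _ assms
proof (rule polar_kernel_if_rot_invariant)
  fix a u assume "fst a \<noteq> 0" and "polar F1 a u = 0"
  obtain s c l w where "s \<noteq> 0" and a: "a = (s, c * s)" and u: "u = (l * s, (w + l * c) * s)"
    using \<open>fst a \<noteq> 0\<close> by (rule normal_coordinates)
  have "polar Q a u = 0" and "polar G1 a u = 0"
    using \<open>polar F1 a u = 0\<close> by (simp_all add: F1_def polar_Pair zero_prod_def)
  then have "w = 0 \<and> (l = 0 \<or> l = 1)"
    using \<open>s \<noteq> 0\<close> by (intro F1_kernel_normal) (simp_all add: a u polar_Q_normal polar_G1_normal)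
  then show "u = 0 \<or> u = a"
    by (auto simp: a u zero_prod_def)
qed

end

lemma APN_almost_3_to_1_F1:
  fixes \<sigma> :: "'a::{field,finite} \<Rightarrow> 'a"
  assumes "char2_field_endo_fix3 \<sigma>"
  shows "APN (char2_field_endo.F1 \<sigma>) \<and> almost_3_to_1 (char2_field_endo.F1 \<sigma>)"
proof -
  interpret char2_field_endo_fix3 \<sigma>
    by fact
  show ?thesis
    using char2_prod_add_self polar_F1_add polar_F1_kernel F1_rot rot_rot[OF char2]
    by (blast intro: APN_if_polar_kernel almost_3_to_1_if_polar_kernel)
qed

section \<open>The kernel of the second map\<close>

locale char2_field_endo_fix6 = char2_field_endo +
  assumes fixed6: "\<sigma> (\<sigma> (\<sigma> (\<sigma> (\<sigma> (\<sigma> x))))) = x \<Longrightarrow> x = 0 \<or> x = 1"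

sublocale char2_field_endo_fix6 \<subseteq> char2_field_endo_fix3
  by unfold_locales (simp add: fixed6)

context char2_field_endo_fix6
begin

lemma fixed2: "\<sigma> (\<sigma> x) = x \<Longrightarrow> x = 0 \<or> x = 1"
  by (simp add: fixed6)

lemma no_primitive_cube_root_of_unity: "1 + c + c\<^sup>2 \<noteq> (0::'a)"
proof
  assume K: "1 + c + c\<^sup>2 = 0"
  have "(\<sigma> c + c) * (\<sigma> c + c + 1) = \<sigma> (1 + c + c\<^sup>2) + (1 + c + c\<^sup>2)"
    by (simp add: char2_ring)
  then have "(\<sigma> c + c) * (\<sigma> c + c + 1) = 0"
    by (simp add: K)
  then have "\<sigma> (\<sigma> c) = c"
    by (auto simp: char2_add_eq_0_iff add.assoc char2_add_self[OF char2])
  then have "c = 0 \<or> c = 1"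
    by (rule fixed2)
  with K show False
    by (auto simp: char2_ring)
qed

lemma G1_one_nonzero: "G1 (1, c) \<noteq> 0"
proof
  assume "G1 (1, c) = 0"
  then have "1 + c + c * \<sigma> (\<sigma> c) = 0"
    by (simp add: G1_def)
  interpret \<sigma>2: char2_field_endo "\<lambda>x. \<sigma> (\<sigma> x)"
    by unfold_locales (simp_all add: char2)
  have "\<sigma> (\<sigma> (\<sigma> (\<sigma> (\<sigma> (\<sigma> c))))) = c"
    using \<sigma>2.endo_cube_fixed_if_mobius \<open>1 + c + c * \<sigma> (\<sigma> c) = 0\<close> by simp
  then have "c = 0 \<or> c = 1"
    by (rule fixed6)
  with \<open>1 + c + c * \<sigma> (\<sigma> c) = 0\<close> show False
    by (auto simp: char2_ring)
qed

lemma F2_kernel_R_zero: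
  assumes E1: "(l + \<sigma> l) * (1 + \<sigma> c + c * \<sigma> c) + (1 + c) * \<sigma> w + w * \<sigma> c = 0"
    and E2: "(l + \<sigma> (\<sigma> (\<sigma> l))) * (c + \<sigma> (\<sigma> (\<sigma> c))) + w + \<sigma> (\<sigma> (\<sigma> w)) = 0"
  shows "(l + \<sigma> l) * (c + \<sigma> c) + w + \<sigma> w = 0"
proof -
  define c' c'' c''' l' l'' l''' w' w'' w''' where "c' = \<sigma> c" and "c'' = \<sigma> c'" and "c''' = \<sigma> c''"
    and "l' = \<sigma> l" and "l'' = \<sigma> l'" and "l''' = \<sigma> l''" and "w' = \<sigma> w" and "w'' = \<sigma> w'" and "w''' = \<sigma> w''"
  note primes = c'_def[symmetric] c''_def[symmetric] c'''_def[symmetric] l'_def[symmetric]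
    l''_def[symmetric] l'''_def[symmetric] w'_def[symmetric] w''_def[symmetric] w'''_def[symmetric]
  define r r' r'' where "r = (l + l') * (c + c') + w + w'" and "r' = \<sigma> r" and "r'' = \<sigma> r'"
  have r': "r' = (l' + l'') * (c' + c'') + w' + w''" and r'': "r'' = (l'' + l''') * (c'' + c''') + w'' + w'''"
    by (simp_all add: r_def r'_def r''_def primes)
  have e1: "(l + l') * (1 + c' + c * c') + (1 + c) * w' + w * c' = 0"
    using E1 by (simp add: primes)
  have e1': "(l' + l'') * (1 + c'' + c' * c'') + (1 + c') * w'' + w' * c'' = 0"
    using arg_cong[where f = \<sigma>, OF e1] by (simp add: primes)
  have e1'': "(l'' + l''') * (1 + c''' + c'' * c''') + (1 + c'') * w''' + w'' * c''' = 0"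
    using arg_cong[where f = \<sigma>, OF e1'] by (simp add: primes)
  define K' K'' M M' P where "K' = 1 + c' + c'\<^sup>2" and "K'' = 1 + c'' + c''\<^sup>2"
    and "M = 1 + c + c * c''" and "M' = 1 + c' + c' * c'''"
    and "P = 1 + c*c' + c*c'*c''*c''' + c*c'' + c*c''*c''' + c*c''' + c'*c'' + c'*c''*c''' + c'*c''' + c'' + c'''"
  txt \<open>Eliminate \<open>l\<close> and \<open>w\<close>, except through \<open>r\<close>.\<close>
  have "K' * K'' * ((l + l''') * (c + c''') + w + w''') =
      (c' + c'*c'' + c'*c''\<^sup>2 + c''*c''' + c''\<^sup>2*c''' + c''') * ((l + l') * (1 + c' + c * c') + (1 + c) * w' + w * c') +
      (c + c*c' + c*c'*c'' + c*c'*c''' + c*c''*c''' + c' + c'*c''*c''' + c'' + c''*c''' + c''') *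
        ((l' + l'') * (1 + c'' + c' * c'') + (1 + c') * w'' + w' * c'') +
      (c + c*c' + c*c'\<^sup>2 + c'*c'' + c'\<^sup>2*c'' + c'') * ((l'' + l''') * (1 + c''' + c'' * c''') + (1 + c'') * w''' + w'' * c''') +
      K'' * M' * r + P * r' + K' * M * r''"
    by (simp add: r_def r' r'' K'_def K''_def M_def M'_def P_def char2_ring)
  with e1 e1' e1'' E2 have elim: "K'' * M' * r + P * r' + K' * M * r'' = 0"
    by (simp add: primes)
  have "K' * M \<noteq> 0"
    using no_primitive_cube_root_of_unity[of c'] G1_one_nonzero[of c] by (simp add: G1_def K'_def M_def primes)
  define T0 T1 where "T0 = c*c'*r' + c'*r + c''*r + r + r'" and "T1 = c*c'*r' + c*r' + c'*c''*r + c'*r' + r"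
  have "\<sigma> T0 = c'*c''*r'' + c''*r' + c'''*r' + r' + r''" and "\<sigma> T1 = c'*c''*r'' + c'*r'' + c''*c'''*r' + c''*r'' + r'"
    and "\<sigma> (K' * M) = K'' * M'"
    by (simp_all add: T0_def T1_def K'_def K''_def M_def M'_def r'_def r''_def primes)
  moreover have "K' * M * (c'*c''*r'' + c''*r' + c'''*r' + r' + r'') =
      K'' * M' * T1 + (1 + c'*c'') * (K'' * M' * r + P * r' + K' * M * r'')"
    and "K' * M * (c'*c''*r'' + c'*r'' + c''*c'''*r' + c''*r'' + r') =
      K'' * M' * (T0 + T1) + (c' + c'*c'' + c'') * (K'' * M' * r + P * r' + K' * M * r'')"
    by (simp_all add: T0_def T1_def K'_def K''_def M_def M'_def P_def char2_ring)
  ultimately have "T0 = 0 \<and> T1 = 0"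
    using elim \<open>K' * M \<noteq> 0\<close> by (intro rot_twisted_fixed_point_scaled[of "K' * M"]) simp_all
  moreover have "K' * M * r = c * ((1 + c') * T0 + c' * T1) + c' * T0 + T1"
    by (simp add: T0_def T1_def K'_def M_def char2_ring)
  ultimately have "r = 0"
    using \<open>K' * M \<noteq> 0\<close> by simp
  then show ?thesis
    by (simp add: r_def primes)
qed

lemma F2_kernel_conj2_invariants:
  assumes E1: "(l + \<sigma> l) * (1 + \<sigma> c + c * \<sigma> c) + (1 + c) * \<sigma> w + w * \<sigma> c = 0"
    and R: "(l + \<sigma> l) * (c + \<sigma> c) + w + \<sigma> w = 0"
  defines "K \<equiv> 1 + c + c\<^sup>2"
  shows "\<sigma> (\<sigma> (w / K)) = w / K" and "\<sigma> (\<sigma> ((l * K + w * c) / K)) = (l * K + w * c) / K"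
proof -
  define c' c'' l' l'' w' w'' where "c' = \<sigma> c" and "c'' = \<sigma> c'" and "l' = \<sigma> l"
    and "l'' = \<sigma> l'" and "w' = \<sigma> w" and "w'' = \<sigma> w'"
  note primes = c'_def[symmetric] c''_def[symmetric] l'_def[symmetric] l''_def[symmetric]
    w'_def[symmetric] w''_def[symmetric]
  have e1: "(l + l') * (1 + c' + c * c') + (1 + c) * w' + w * c' = 0"
    and r: "(l + l') * (c + c') + w + w' = 0"
    using E1 R by (simp_all add: primes)
  have e1': "(l' + l'') * (1 + c'' + c' * c'') + (1 + c') * w'' + w' * c'' = 0"
    and r': "(l' + l'') * (c' + c'') + w' + w'' = 0"
    using arg_cong[where f = \<sigma>, OF e1] arg_cong[where f = \<sigma>, OF r] by (simp_all add: primes)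
  define K' K'' where "K' = 1 + c' + c'\<^sup>2" and "K'' = 1 + c'' + c''\<^sup>2"
  have "K \<noteq> 0" "K' \<noteq> 0" "K'' \<noteq> 0"
    using no_primitive_cube_root_of_unity[of c] no_primitive_cube_root_of_unity[of c']
      no_primitive_cube_root_of_unity[of c''] by (simp_all add: K_def K'_def K''_def)
  have "K' * (K * (l'' * K'' + w'' * c'') + K'' * (l * K + w * c)) =
      (1 + c + c*c' + c*c'*c'' + c*c'*c''\<^sup>2 + c*c'' + c*c''\<^sup>2 + c'' + c''\<^sup>2) * ((l + l') * (1 + c' + c * c') + (1 + c) * w' + w * c') +
      (c + c*c'' + c*c''\<^sup>2 + c' + c'*c'' + c'*c''\<^sup>2) * ((l + l') * (c + c') + w + w') +
      (1 + c + c*c'*c'' + c*c'' + c\<^sup>2 + c\<^sup>2*c'*c'' + c\<^sup>2*c'' + c'*c'' + c'') * ((l' + l'') * (1 + c'' + c' * c'') + (1 + c') * w'' + w' * c'') +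
      (1 + c + c*c' + c*c'*c'' + c\<^sup>2 + c\<^sup>2*c' + c\<^sup>2*c'*c'' + c' + c'*c'') * ((l' + l'') * (c' + c'') + w' + w'')"
    and "K' * (K * w'' + K'' * w) =
      (c + c*c'' + c*c''\<^sup>2 + c' + c'*c'' + c'*c''\<^sup>2) * ((l + l') * (1 + c' + c * c') + (1 + c) * w' + w * c') +
      (1 + c*c' + c*c'*c'' + c*c'*c''\<^sup>2 + c' + c'*c'' + c'*c''\<^sup>2 + c'' + c''\<^sup>2) * ((l + l') * (c + c') + w + w') +
      (c*c' + c*c'' + c\<^sup>2*c' + c\<^sup>2*c'' + c' + c'') * ((l' + l'') * (1 + c'' + c' * c'') + (1 + c') * w'' + w' * c'') +
      (1 + c + c*c'*c'' + c*c'' + c\<^sup>2 + c\<^sup>2*c'*c'' + c\<^sup>2*c'' + c'*c'' + c'') * ((l' + l'') * (c' + c'') + w' + w'')"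
    by (simp_all add: K_def K'_def K''_def char2_ring)
  with e1 r e1' r' have "K' * (K * (l'' * K'' + w'' * c'') + K'' * (l * K + w * c)) = 0"
    and "K' * (K * w'' + K'' * w) = 0"
    by simp_all
  with \<open>K' \<noteq> 0\<close> have "K * (l'' * K'' + w'' * c'') = K'' * (l * K + w * c)" and "K * w'' = K'' * w"
    by (simp_all add: char2_add_eq_0_iff)
  with \<open>K \<noteq> 0\<close> \<open>K'' \<noteq> 0\<close> show "\<sigma> (\<sigma> (w / K)) = w / K"
    and "\<sigma> (\<sigma> ((l * K + w * c) / K)) = (l * K + w * c) / K"
    by (simp_all add: K_def K''_def primes frac_eq_eq mult.commute)
qed

lemma F2_kernel_normal_if_R_zero:
  assumes E1: "(l + \<sigma> l) * (1 + \<sigma> c + c * \<sigma> c) + (1 + c) * \<sigma> w + w * \<sigma> c = 0"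
    and R: "(l + \<sigma> l) * (c + \<sigma> c) + w + \<sigma> w = 0"
  shows "w = 0 \<and> (l = 0 \<or> l = 1)"
proof -
  define K where "K = 1 + c + c\<^sup>2"
  define p q where "p = (l * K + w * c) / K" and "q = w / K"
  have "K \<noteq> 0"
    using no_primitive_cube_root_of_unity[of c] by (simp add: K_def)
  have "\<sigma> (\<sigma> p) = p" and "\<sigma> (\<sigma> q) = q"
    using F2_kernel_conj2_invariants[OF E1 R] by (simp_all add: p_def q_def K_def)
  then have p: "p = 0 \<or> p = 1" and q: "q = 0 \<or> q = 1"
    using fixed2 by blast+
  have w: "w = q * K" and l: "l = p + q * c"
    using \<open>K \<noteq> 0\<close> by (simp_all add: p_def q_def field_simps char2_two_eq_0[OF char2])
  have "\<sigma> q = q" and "\<sigma> p = p"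
    using p q by auto
  with E1 w l have "q * Q (1, c) = 0"
    by (simp add: K_def Q_def char2_ring)
  then have "q = 0"
    using Q_one_nonzero[of c] by simp
  with p w l show ?thesis
    by simp
qed

lemma polar_F2_kernel:
  assumes "a \<noteq> 0" and "polar F2 a u = 0"
  shows "u = 0 \<or> u = a"
  using F2_rot _ assms
proof (rule polar_kernel_if_rot_invariant)
  fix a u assume "fst a \<noteq> 0" and "polar F2 a u = 0"
  obtain s c l w where "s \<noteq> 0" and a: "a = (s, c * s)" and u: "u = (l * s, (w + l * c) * s)"
    using \<open>fst a \<noteq> 0\<close> by (rule normal_coordinates)
  have "polar Q a u = 0" and "polar G2 a u = 0"
    using \<open>polar F2 a u = 0\<close> by (simp_all add: F2_def polar_Pair zero_prod_def)
  then have "w = 0 \<and> (l = 0 \<or> l = 1)"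
    using \<open>s \<noteq> 0\<close>
    by (intro F2_kernel_normal_if_R_zero F2_kernel_R_zero) (simp_all add: a u polar_Q_normal polar_G2_normal)
  then show "u = 0 \<or> u = a"
    by (auto simp: a u zero_prod_def)
qed

end

lemma APN_almost_3_to_1_F2:
  fixes \<sigma> :: "'a::{field,finite} \<Rightarrow> 'a"
  assumes "char2_field_endo_fix6 \<sigma>"
  shows "APN (char2_field_endo.F2 \<sigma>) \<and> almost_3_to_1 (char2_field_endo.F2 \<sigma>)"
proof -
  interpret char2_field_endo_fix6 \<sigma>
    by fact
  show ?thesis
    using char2_prod_add_self polar_F2_add polar_F2_kernel F2_rot rot_rot[OF char2]
    by (blast intro: APN_if_polar_kernel almost_3_to_1_if_polar_kernel)
qed

section \<open>The Frobenius power\<close>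

definition frob :: "nat \<Rightarrow> 'a::comm_ring_1 \<Rightarrow> 'a" where
  "frob k x = x ^ 2 ^ k"

lemma frob_frob: "frob k (frob j x) = frob (j + k) x"
  by (simp add: frob_def power_mult power_add)

lemma char2_field_endo_frob:
  assumes "CHAR('a::field) = 2"
  shows "char2_field_endo (frob k :: 'a \<Rightarrow> 'a)"
  by unfold_locales (simp_all add: assms frob_def char2_power_two_power_add power_mult_distrib)

lemma frob_fixed_points:
  fixes x :: "'a::{field,finite}"
  assumes "card (UNIV :: 'a set) = 2 ^ m" and "coprime e m" and "frob e x = x"
  shows "x = 0 \<or> x = 1"
  using assms power_card_eq_self[of x] by (intro fixed_by_coprime_two_powers[of x e m]) (simp_all add: frob_def)

lemma char2_field_endo_fix3_frob:
  fixes k :: nat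
  assumes card: "card (UNIV :: 'a::{field,finite} set) = 2 ^ m" and "coprime (3 * k) m"
  shows "char2_field_endo_fix3 (frob k :: 'a \<Rightarrow> 'a)"
proof (intro char2_field_endo_fix3.intro char2_field_endo_fix3_axioms.intro)
  show "char2_field_endo (frob k :: 'a \<Rightarrow> 'a)"
    by (rule char2_field_endo_frob[OF CHAR_eq_2_if_card_power_2[OF card]])
  fix x :: 'a
  assume "frob k (frob k (frob k x)) = x"
  then have "frob (3 * k) x = x"
    by (simp add: frob_frob numeral_3_eq_3 add.assoc)
  then show "x = 0 \<or> x = 1"
    using card \<open>coprime (3 * k) m\<close> by (rule frob_fixed_points[rotated 2])
qed

lemma char2_field_endo_fix6_frob:
  fixes k :: nat
  assumes card: "card (UNIV :: 'a::{field,finite} set) = 2 ^ m" and "coprime (6 * k) m"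
  shows "char2_field_endo_fix6 (frob k :: 'a \<Rightarrow> 'a)"
proof (intro char2_field_endo_fix6.intro char2_field_endo_fix6_axioms.intro)
  show "char2_field_endo (frob k :: 'a \<Rightarrow> 'a)"
    by (rule char2_field_endo_frob[OF CHAR_eq_2_if_card_power_2[OF card]])
  fix x :: 'a
  assume "frob k (frob k (frob k (frob k (frob k (frob k x))))) = x"
  then have "frob (6 * k) x = x"
    by (simp add: frob_frob numeral_eq_Suc add.assoc)
  then show "x = 0 \<or> x = 1"
    using card \<open>coprime (6 * k) m\<close> by (rule frob_fixed_points[rotated 2])
qed

lemma f1_eq_F1:
  assumes "CHAR('a::field) = 2"
  shows "(f1 k :: 'a \<times> 'a \<Rightarrow> 'a \<times> 'a) = char2_field_endo.F1 (frob k)"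
proof -
  interpret char2_field_endo "frob k :: 'a \<Rightarrow> 'a"
    using assms by (rule char2_field_endo_frob)
  show ?thesis
    by (simp add: fun_eq_iff f1_def F1_def Q_def G1_def frob_def power_add mult_2 mult_2_right
        power_mult[symmetric] mult.commute)
qed

lemma f2_eq_F2:
  assumes "CHAR('a::field) = 2"
  shows "(f2 k :: 'a \<times> 'a \<Rightarrow> 'a \<times> 'a) = char2_field_endo.F2 (frob k)"
proof -
  interpret char2_field_endo "frob k :: 'a \<Rightarrow> 'a"
    using assms by (rule char2_field_endo_frob)
  show ?thesis
    by (simp add: fun_eq_iff f2_def F2_def Q_def G2_def frob_def power_add numeral_3_eq_3
        power_mult[symmetric] mult.commute)
qed

lemma APN_almost_3_to_1_f1:
  assumes card: "card (UNIV :: 'a::{field,finite} set) = 2 ^ m" and "coprime (3 * k) m"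
  shows "APN (f1 k :: 'a \<times> 'a \<Rightarrow> 'a \<times> 'a) \<and> almost_3_to_1 (f1 k :: 'a \<times> 'a \<Rightarrow> 'a \<times> 'a)"
  unfolding f1_eq_F1[OF CHAR_eq_2_if_card_power_2[OF card]]
  using assms by (intro APN_almost_3_to_1_F1 char2_field_endo_fix3_frob)

lemma APN_almost_3_to_1_f2:
  assumes card: "card (UNIV :: 'a::{field,finite} set) = 2 ^ m" and "coprime (6 * k) m"
  shows "APN (f2 k :: 'a \<times> 'a \<Rightarrow> 'a \<times> 'a) \<and> almost_3_to_1 (f2 k :: 'a \<times> 'a \<Rightarrow> 'a \<times> 'a)"
  unfolding f2_eq_F2[OF CHAR_eq_2_if_card_power_2[OF card]]
  using assms by (intro APN_almost_3_to_1_F2 char2_field_endo_fix6_frob)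

theorem theorem4p8:
  fixes m k :: nat
  assumes "m > 0" and "k > 0"
    and "card (UNIV :: 'a::{field,finite} set) = 2 ^ m"
  shows "(gcd (3 * k) m = 1 \<longrightarrow>
            APN (f1 k :: 'a \<times> 'a \<Rightarrow> 'a \<times> 'a) \<and> almost_3_to_1 (f1 k :: 'a \<times> 'a \<Rightarrow> 'a \<times> 'a))
       \<and> (gcd (3 * k) m = 1 \<and> odd m \<longrightarrow>
            APN (f2 k :: 'a \<times> 'a \<Rightarrow> 'a \<times> 'a) \<and> almost_3_to_1 (f2 k :: 'a \<times> 'a \<Rightarrow> 'a \<times> 'a))"
proof (rule conjI; intro impI)
  assume "gcd (3 * k) m = 1"
  then have "coprime (3 * k) m"
    by (simp only: coprime_iff_gcd_eq_1)
  with assms(3) show "APN (f1 k :: 'a \<times> 'a \<Rightarrow> 'a \<times> 'a) \<and> almost_3_to_1 (f1 k :: 'a \<times> 'a \<Rightarrow> 'a \<times> 'a)"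
    by (rule APN_almost_3_to_1_f1)
next
  assume "gcd (3 * k) m = 1 \<and> odd m"
  then have "coprime (3 * k) m" and "coprime 2 m"
    by (simp only: coprime_iff_gcd_eq_1, simp)
  then have "coprime (6 * k) m"
    using coprime_mult_left_iff[of 2 "3 * k" m] by simp
  with assms(3) show "APN (f2 k :: 'a \<times> 'a \<Rightarrow> 'a \<times> 'a) \<and> almost_3_to_1 (f2 k :: 'a \<times> 'a \<Rightarrow> 'a \<times> 'a)"
    by (rule APN_almost_3_to_1_f2)
qed

end
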